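(* Let $(X,d_X)$, $(Y,d_Y)$ be metric spaces with $Y$ separable, and let $1\le\xi<\omega_1$. For every $f:X\to Y$ the following are equivalent: (i) $f$ is of Baire class $\xi$; (ii) there is a sequence $\langle f_k:k\in\omega\rangle$ converging uniformly to $f$ such that each $f_k$ is locally constant on some $\mathbf{\Sigma}^0_{\xi+1}$-partition of $X$; (iii) there is a sequence $\langle f_k:k\in\omega\rangle$ converging uniformly to $f$ such that each $f_k$ is locally Lipschitz on some $\mathbf{\Sigma}^0_{\xi+1}$-partition of $X$; (iv) there is a sequence $\langle f_k:k\in\omega\rangle$ converging uniformly to $f$ such that each $f_k$ is locally continuous on some $\mathbf{\Sigma}^0_{\xi+1}$-partition of $X$; (v) there is a sequence $\langle f_k:k\in\omega\rangle$ converging uniformly to $f$ such that each $f_k$ is a $\mathbf{\Delta}^0_{\xi+1}$-function.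
   Context: Work in ZF plus countable choice over the reals. $f$ is of Baire class $1$ if $f^{-1}(U)\in\mathbf{\Sigma}^0_2(X)$ for every open $U\subseteq Y$; for $1<\xi<\omega_1$, $f$ is of Baire class $\xi$ if it is the pointwise limit of functions $f_n:X\to Y$ each of Baire class $\xi_n$ for some $1\le\xi_n<\xi$. A $\mathbf{\Gamma}$-partition of $X$ is a family $\langle C_n:n<N\rangle$, $1\le N\le\omega$, of nonempty pairwise disjoint sets in $\mathbf{\Gamma}$ with union $X$. For a set $\mathcal{F}$ of functions $X\to Y$, a function $g:X\to Y$ is locally in $\mathcal{F}$ on the partition $\langle C_n:n<N\rangle$ if there are $g_n\in\mathcal{F}$ with $g\restriction C_n=g_n\restriction C_n$ for all $n<N$ ("locally constant/Lipschitz/continuous" means $\mathcal{F}$ is the set of constant/Lipschitz/continuous functions $X\to Y$). $g$ is a $\mathbf{\Delta}^0_\eta$-function if $g^{-1}(A)\in\mathbf{\Sigma}^0_\eta(X)$ for every $A\in\mathbf{\Sigma}^0_\eta(Y)$. *)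

theory Defs
  imports "HOL-Analysis.Analysis" "HOL-Library.Extended_Nat"
begin

text \<open>Ordinals are represented by elements of an arbitrary well-ordered type 'i.
  The least element plays the role of 0; ord_one is the ordinal 1.\<close>

definition ord_zero :: "'i::wellorder \<Rightarrow> bool" where
  "ord_zero \<xi> \<longleftrightarrow> (\<forall>\<eta>. \<xi> \<le> \<eta>)"

definition ord_one :: "'i::wellorder \<Rightarrow> bool" where
  "ord_one \<xi> \<longleftrightarrow> \<not> ord_zero \<xi> \<and> (\<forall>\<eta><\<xi>. ord_zero \<eta>)"

inductive Sigma0 :: "'i::wellorder \<Rightarrow> 'a::topological_space set \<Rightarrow> bool" where
  Sigma0_open: "ord_one (\<xi>::'i) \<Longrightarrow> open A \<Longrightarrow> Sigma0 \<xi> A"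
| Sigma0_union: "\<not> ord_zero (\<xi>::'i) \<Longrightarrow> \<not> ord_one \<xi> \<Longrightarrow>
     (\<forall>n. \<not> ord_zero ((\<eta>::nat \<Rightarrow> 'i) n) \<and> \<eta> n < \<xi> \<and> Sigma0 (\<eta> n) (- A n)) \<Longrightarrow>
     Sigma0 \<xi> (\<Union>n. A n)"

text \<open>Sigma^0_{xi+1}: countable unions of Pi^0_eta sets, 1 \<le> eta < xi+1.\<close>

definition Sigma0_succ :: "'i::wellorder \<Rightarrow> 'a::topological_space set \<Rightarrow> bool" where
  "Sigma0_succ \<xi> B \<longleftrightarrow> (\<exists>(A::nat \<Rightarrow> 'a set) (\<eta>::nat \<Rightarrow> 'i).
      (\<forall>n. \<not> ord_zero (\<eta> n) \<and> \<eta> n \<le> \<xi> \<and> Sigma0 (\<eta> n) (- A n)) \<and> B = (\<Union>n. A n))"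

inductive baire_class :: "'i::wellorder \<Rightarrow> ('a::metric_space \<Rightarrow> 'b::metric_space) \<Rightarrow> bool" where
  baire_one: "ord_one (\<xi>::'i) \<Longrightarrow> (\<forall>U. open U \<longrightarrow> Sigma0_succ \<xi> (f -` U)) \<Longrightarrow> baire_class \<xi> f"
| baire_lim: "\<not> ord_zero (\<xi>::'i) \<Longrightarrow> \<not> ord_one \<xi> \<Longrightarrow>
     (\<forall>n. \<not> ord_zero ((\<eta>::nat \<Rightarrow> 'i) n) \<and> \<eta> n < \<xi> \<and> baire_class (\<eta> n) (fs n)) \<Longrightarrow>
     (\<forall>x. (\<lambda>n. fs n x) \<longlonglongrightarrow> f x) \<Longrightarrow> baire_class \<xi> f"

definition Sigma_succ_partition :: "'i::wellorder \<Rightarrow> enat \<Rightarrow> (nat \<Rightarrow> 'a::topological_space set) \<Rightarrow> bool" where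
  "Sigma_succ_partition \<xi> N C \<longleftrightarrow> 1 \<le> N \<and>
     (\<forall>n. enat n < N \<longrightarrow> C n \<noteq> {} \<and> Sigma0_succ \<xi> (C n)) \<and>
     (\<forall>m n. enat m < N \<longrightarrow> enat n < N \<longrightarrow> m \<noteq> n \<longrightarrow> C m \<inter> C n = {}) \<and>
     (\<Union>{C n |n. enat n < N}) = UNIV"

definition locally_in_on :: "(('a \<Rightarrow> 'b) \<Rightarrow> bool) \<Rightarrow> enat \<Rightarrow> (nat \<Rightarrow> 'a set) \<Rightarrow> ('a \<Rightarrow> 'b) \<Rightarrow> bool" where
  "locally_in_on F N C g \<longleftrightarrow> (\<forall>n. enat n < N \<longrightarrow> (\<exists>h. F h \<and> (\<forall>x\<in>C n. g x = h x)))"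

definition locally_on_Sigma_succ_partition ::
    "'i::wellorder \<Rightarrow> (('a::topological_space \<Rightarrow> 'b) \<Rightarrow> bool) \<Rightarrow> ('a \<Rightarrow> 'b) \<Rightarrow> bool" where
  "locally_on_Sigma_succ_partition \<xi> F g \<longleftrightarrow>
     (\<exists>N C. Sigma_succ_partition \<xi> N C \<and> locally_in_on F N C g)"

definition const_fun :: "('a \<Rightarrow> 'b) \<Rightarrow> bool" where
  "const_fun h \<longleftrightarrow> (\<exists>c. h = (\<lambda>_. c))"

definition lipschitz_fun :: "('a::metric_space \<Rightarrow> 'b::metric_space) \<Rightarrow> bool" where
  "lipschitz_fun h \<longleftrightarrow> (\<exists>L. L-lipschitz_on UNIV h)"

definition cont_fun :: "('a::topological_space \<Rightarrow> 'b::topological_space) \<Rightarrow> bool" where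
  "cont_fun h \<longleftrightarrow> continuous_on UNIV h"

definition Delta_succ_function :: "'i::wellorder \<Rightarrow> ('a::topological_space \<Rightarrow> 'b::topological_space) \<Rightarrow> bool" where
  "Delta_succ_function \<xi> g \<longleftrightarrow> (\<forall>A::'b set. Sigma0_succ \<xi> A \<longrightarrow> Sigma0_succ \<xi> (g -` A))"

end

theory Submission
  imports Defs
begin

text \<open>All five conditions are equivalent to \<open>Sigma0_succ\<close>-measurability of \<open>f\<close> (preimages of
  open sets lie in the class). Baire class functions are measurable by Lebesgue's identity
  \<open>f -` U = (\<Union>m N. \<Inter>n\<ge>N. fs n -` F m)\<close> for closed sets \<open>F m\<close> exhausting \<open>U\<close>, and uniform limits of
  measurable functions are measurable. A measurable function is a uniform limit of functions that
  are constant on the pieces of a partition, obtained by disjointifying the \<open>Pi0\<close> pieces of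
  preimages of small balls around a dense sequence; and locally continuous functions are
  \<open>Delta_succ\<close>-functions. Finally a measurable \<open>f\<close> is of Baire class \<open>\<xi>\<close> by induction on \<open>\<xi>\<close>:
  for \<open>\<xi> > 1\<close> every \<open>Pi0\<close> piece is an intersection of sets of lower classes, and the finitely
  many of them seen up to stage \<open>m\<close> define a function of lower class; these functions converge
  pointwise to \<open>f\<close>.\<close>

lemma ex_ord_one_le:
  assumes "\<not> ord_zero (\<xi>::'i::wellorder)"
  shows "\<exists>w. ord_one w \<and> w \<le> \<xi>"
proof -
  define w where "w = (LEAST x::'i. \<not> ord_zero x)"
  have "\<not> ord_zero w" unfolding w_def by (rule LeastI) (rule assms)
  moreover have "w \<le> \<xi>" unfolding w_def by (rule Least_le) (rule assms)
  moreover have "\<forall>\<eta><w. ord_zero \<eta>"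
    unfolding w_def using not_less_Least by blast
  ultimately show ?thesis unfolding ord_one_def by blast
qed

lemma less_imp_not_ord_zero_one:
  "\<not> ord_zero (\<eta>::'i::wellorder) \<Longrightarrow> \<eta> < \<xi> \<Longrightarrow> \<not> ord_zero \<xi> \<and> \<not> ord_one \<xi>"
  unfolding ord_one_def ord_zero_def by (meson less_le_not_le order.trans)

lemma UN_UN_prod_decode:
  "(\<Union>n. \<Union>j. A n j) = (\<Union>c. A (fst (prod_decode c)) (snd (prod_decode c)))"
  by (auto, metis fst_conv prod_encode_inverse snd_conv)

lemma closed_eq_INT_thickenings:
  fixes P :: "'a::metric_space set"
  assumes "closed P"
  shows "P = (\<Inter>n. \<Union>z\<in>P. ball z (1 / Suc n))"
proof
  show "P \<subseteq> (\<Inter>n. \<Union>z\<in>P. ball z (1 / Suc n))" by force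
  show "(\<Inter>n. \<Union>z\<in>P. ball z (1 / Suc n)) \<subseteq> P"
  proof
    fix x assume x: "x \<in> (\<Inter>n. \<Union>z\<in>P. ball z (1 / Suc n))"
    have "\<exists>y\<in>P. dist y x < e" if "e > 0" for e :: real
    proof -
      obtain n where n: "1 / real (Suc n) < e" using \<open>e > 0\<close> nat_approx_posE by blast
      from x obtain z where "z \<in> P" "dist z x < 1 / Suc n" by auto
      with n show ?thesis by (meson order.strict_trans)
    qed
    then show "x \<in> P" using assms closure_approachable closure_closed by blast
  qed
qed

section \<open>The additive classes \<open>Sigma0\<close>\<close>

lemma Sigma0_not_ord_zero: "Sigma0 \<xi> A \<Longrightarrow> \<not> ord_zero \<xi>"
  by (induction rule: Sigma0.induct) (auto simp: ord_one_def)

lemma Sigma0_ord_one_imp_open: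
  assumes "Sigma0 (\<xi>::'i::wellorder) A" "ord_one \<xi>"
  shows "open A"
  using assms by (cases rule: Sigma0.cases) auto

lemma open_eq_UN_Pi0E:
  fixes A :: "'a::metric_space set"
  assumes "open A" "ord_one (\<eta>::'i::wellorder)"
  obtains F :: "nat \<Rightarrow> 'a set" where "\<And>n. Sigma0 \<eta> (- F n)" "A = (\<Union>n. F n)"
proof -
  let ?F = "\<lambda>n. - (\<Union>z\<in>-A. ball z (1 / Suc n))"
  have "- A = (\<Inter>n. - ?F n)" using closed_eq_INT_thickenings[of "- A"] assms(1) by (simp add: closed_Compl)
  then have "A = (\<Union>n. ?F n)" by blast
  moreover have "Sigma0 \<eta> (- ?F n)" for n using assms(2) by (auto intro!: Sigma0_open)
  ultimately show thesis using that[of ?F] by blast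
qed

lemma Sigma0_UN:
  assumes "\<And>n. Sigma0 ((\<eta>::nat \<Rightarrow> 'i::wellorder) n) (- A n)" "\<And>n. \<eta> n < \<xi>"
  shows "Sigma0 \<xi> (\<Union>n. A n)"
proof (rule Sigma0_union)
  have "\<not> ord_zero (\<eta> 0)" using assms(1) by (rule Sigma0_not_ord_zero)
  then show "\<not> ord_zero \<xi>" "\<not> ord_one \<xi>" using less_imp_not_ord_zero_one assms(2) by blast+
  show "\<forall>n. \<not> ord_zero (\<eta> n) \<and> \<eta> n < \<xi> \<and> Sigma0 (\<eta> n) (- A n)"
    using assms Sigma0_not_ord_zero by blast
qed

lemma Sigma0_not_ord_oneE:
  assumes "Sigma0 \<xi> B" "\<not> ord_one \<xi>"
  obtains \<eta> :: "nat \<Rightarrow> 'i::wellorder" and A :: "nat \<Rightarrow> 'a::topological_space set"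
  where "\<And>n. \<eta> n < \<xi> \<and> Sigma0 (\<eta> n) (- A n)" "B = (\<Union>n. A n)"
  using assms(1)
proof (cases rule: Sigma0.cases)
  case (Sigma0_union \<eta> A)
  then show ?thesis by (intro that[of \<eta> A]) auto
qed (use assms(2) in simp)

lemma Sigma0_mono:
  fixes A :: "'a::metric_space set"
  assumes A: "Sigma0 (\<eta>::'i::wellorder) A" and "\<eta> \<le> \<zeta>"
  shows "Sigma0 \<zeta> A"
proof (cases "\<eta> = \<zeta>")
  case False
  then have less: "\<eta> < \<zeta>" using \<open>\<eta> \<le> \<zeta>\<close> by simp
  show ?thesis
  proof (cases "ord_one \<eta>")
    case True
    obtain F :: "nat \<Rightarrow> 'a set" where "\<And>n. Sigma0 \<eta> (- F n)" "A = (\<Union>n. F n)"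
      using open_eq_UN_Pi0E[OF Sigma0_ord_one_imp_open[OF A True] True] by metis
    then show ?thesis using Sigma0_UN[of "\<lambda>_. \<eta>" F \<zeta>] less by simp
  next
    case False
    obtain \<theta> :: "nat \<Rightarrow> 'i" and B :: "nat \<Rightarrow> 'a set"
      where "\<And>n. \<theta> n < \<eta> \<and> Sigma0 (\<theta> n) (- B n)" "A = (\<Union>n. B n)"
      using Sigma0_not_ord_oneE[OF A False] by metis
    then show ?thesis using less by (auto intro: Sigma0_UN less_trans)
  qed
qed (use A in simp)

lemma Sigma0_Un:
  assumes A: "Sigma0 (\<xi>::'i::wellorder) (A::'a::topological_space set)" and B: "Sigma0 \<xi> B"
  shows "Sigma0 \<xi> (A \<union> B)"
proof (cases "ord_one \<xi>")
  case True
  then show ?thesis using A B by (auto intro: Sigma0_open dest: Sigma0_ord_one_imp_open)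
next
  case False
  obtain \<eta>a :: "nat \<Rightarrow> 'i" and An :: "nat \<Rightarrow> 'a set"
    where a: "\<And>n. \<eta>a n < \<xi> \<and> Sigma0 (\<eta>a n) (- An n)" "A = (\<Union>n. An n)"
    using Sigma0_not_ord_oneE[OF A False] by metis
  obtain \<eta>b :: "nat \<Rightarrow> 'i" and Bn :: "nat \<Rightarrow> 'a set"
    where b: "\<And>n. \<eta>b n < \<xi> \<and> Sigma0 (\<eta>b n) (- Bn n)" "B = (\<Union>n. Bn n)"
    using Sigma0_not_ord_oneE[OF B False] by metis
  let ?C = "\<lambda>n. if even n then An (n div 2) else Bn (n div 2)"
  let ?\<eta> = "\<lambda>n. if even n then \<eta>a (n div 2) else \<eta>b (n div 2)"
  have "A \<union> B = (\<Union>n. ?C n)"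
  proof
    have "An n \<subseteq> ?C (2 * n)" "Bn n \<subseteq> ?C (2 * n + 1)" for n by auto
    then show "A \<union> B \<subseteq> (\<Union>n. ?C n)" unfolding a(2) b(2) by blast
    show "(\<Union>n. ?C n) \<subseteq> A \<union> B" unfolding a(2) b(2) by auto
  qed
  moreover have "Sigma0 \<xi> (\<Union>n. ?C n)" by (rule Sigma0_UN[where \<eta>="?\<eta>"]) (use a b in auto)
  ultimately show ?thesis by simp
qed

lemma Sigma0_vimage_continuous:
  assumes "Sigma0 (\<xi>::'i::wellorder) (A::'b::topological_space set)"
    and "continuous_on UNIV (h::'a::topological_space \<Rightarrow> 'b)"
  shows "Sigma0 \<xi> (h -` A)"
  using assms(1)
proof (induction rule: Sigma0.induct)
  case (Sigma0_open \<xi> A)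
  then show ?case using assms(2) by (auto intro!: Sigma0.Sigma0_open open_vimage)
next
  case (Sigma0_union \<xi> \<eta> A)
  then show ?case by (auto intro!: Sigma0.Sigma0_union[where \<eta>=\<eta>] simp: vimage_Compl vimage_UN)
qed

section \<open>The classes \<open>Sigma0_succ\<close> and \<open>Delta0_succ\<close>\<close>

lemma Sigma0_succ_iff:
  fixes \<xi> :: "'i::wellorder" and B :: "'a::topological_space set"
  shows "Sigma0_succ \<xi> B \<longleftrightarrow>
    (\<exists>\<eta> A. (\<forall>n::nat. \<eta> n \<le> \<xi> \<and> Sigma0 (\<eta> n) (- A n)) \<and> B = (\<Union>n. A n))"
  unfolding Sigma0_succ_def using Sigma0_not_ord_zero by metis

lemma Sigma0_succI:
  assumes "\<And>n. Sigma0 ((\<eta>::nat \<Rightarrow> 'i::wellorder) n) (- A n)" "\<And>n. \<eta> n \<le> \<xi>"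
  shows "Sigma0_succ \<xi> (\<Union>n. A n)"
  unfolding Sigma0_succ_iff using assms by (intro exI[of _ \<eta>] exI[of _ A]) auto

lemma Sigma0_succE:
  assumes "Sigma0_succ \<xi> B"
  obtains \<eta> :: "nat \<Rightarrow> 'i::wellorder" and A :: "nat \<Rightarrow> 'a::topological_space set"
  where "\<And>n. \<eta> n \<le> \<xi> \<and> Sigma0 (\<eta> n) (- A n)" "B = (\<Union>n. A n)"
proof -
  obtain A :: "nat \<Rightarrow> 'a set" and \<eta> :: "nat \<Rightarrow> 'i"
    where "\<forall>n. \<not> ord_zero (\<eta> n) \<and> \<eta> n \<le> \<xi> \<and> Sigma0 (\<eta> n) (- A n)" "B = (\<Union>n. A n)"
    using assms unfolding Sigma0_succ_def by blast
  then show thesis using that[of \<eta> A] by blast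
qed

lemma Sigma0_succ_if_Pi0:
  assumes "Sigma0 (\<eta>::'i::wellorder) (- A)" "\<eta> \<le> \<xi>"
  shows "Sigma0_succ \<xi> A"
  using Sigma0_succI[of "\<lambda>_. \<eta>" "\<lambda>_. A"] assms by simp

lemma Sigma0_succ_if_Sigma0:
  fixes A :: "'a::metric_space set"
  assumes A: "Sigma0 (\<eta>::'i::wellorder) A" and "\<eta> \<le> \<xi>"
  shows "Sigma0_succ \<xi> A"
proof (cases "ord_one \<eta>")
  case True
  obtain F :: "nat \<Rightarrow> 'a set" where "\<And>n. Sigma0 \<eta> (- F n)" "A = (\<Union>n. F n)"
    using open_eq_UN_Pi0E[OF Sigma0_ord_one_imp_open[OF A True] True] by metis
  then show ?thesis using Sigma0_succI[of "\<lambda>_. \<eta>" F \<xi>] \<open>\<eta> \<le> \<xi>\<close> by simp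
next
  case False
  obtain \<theta> :: "nat \<Rightarrow> 'i" and B :: "nat \<Rightarrow> 'a set"
    where B: "\<And>n. \<theta> n < \<eta> \<and> Sigma0 (\<theta> n) (- B n)" "A = (\<Union>n. B n)"
    using Sigma0_not_ord_oneE[OF A False] by metis
  have "Sigma0_succ \<xi> (\<Union>n. B n)"
    using B(1) \<open>\<eta> \<le> \<xi>\<close> by (intro Sigma0_succI[where \<eta>=\<theta>]) (auto dest: less_imp_le order.trans)
  then show ?thesis unfolding B(2) .
qed

lemma Sigma0_succ_open:
  assumes "\<not> ord_zero (\<xi>::'i::wellorder)" "open (U::'a::metric_space set)"
  shows "Sigma0_succ \<xi> U"
  using ex_ord_one_le[OF assms(1)] assms(2) by (blast intro: Sigma0_succ_if_Sigma0 Sigma0_open)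

lemma Sigma0_succ_UNIV: "\<not> ord_zero (\<xi>::'i::wellorder) \<Longrightarrow> Sigma0_succ \<xi> (UNIV::'a::metric_space set)"
  and Sigma0_succ_empty: "\<not> ord_zero (\<xi>::'i::wellorder) \<Longrightarrow> Sigma0_succ \<xi> ({}::'a::metric_space set)"
  by (simp_all add: Sigma0_succ_open)

lemma Sigma0_succ_UN:
  assumes "\<And>n. Sigma0_succ (\<xi>::'i::wellorder) ((B::nat \<Rightarrow> 'a::topological_space set) n)"
  shows "Sigma0_succ \<xi> (\<Union>n. B n)"
proof -
  have "\<exists>\<eta> A. (\<forall>j::nat. \<eta> j \<le> \<xi> \<and> Sigma0 (\<eta> j) (- A j)) \<and> B n = (\<Union>j. A j)" for n
    using assms[of n] by (simp add: Sigma0_succ_iff)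
  then obtain \<eta> :: "nat \<Rightarrow> nat \<Rightarrow> 'i" and A :: "nat \<Rightarrow> nat \<Rightarrow> 'a set"
    where A: "\<And>n j. \<eta> n j \<le> \<xi> \<and> Sigma0 (\<eta> n j) (- A n j)" and B: "\<And>n. B n = (\<Union>j. A n j)"
    by metis
  have "Sigma0_succ \<xi> (\<Union>c. A (fst (prod_decode c)) (snd (prod_decode c)))"
    by (rule Sigma0_succI[where \<eta>="\<lambda>c. \<eta> (fst (prod_decode c)) (snd (prod_decode c))"]) (use A in auto)
  then show ?thesis unfolding B UN_UN_prod_decode .
qed

lemma Sigma0_succ_Un:
  assumes "Sigma0_succ (\<xi>::'i::wellorder) (A::'a::topological_space set)" "Sigma0_succ \<xi> B"
  shows "Sigma0_succ \<xi> (A \<union> B)"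
proof -
  have "A \<union> B = (\<Union>n::nat. if n = 0 then A else B)" by (auto split: if_splits)
  then show ?thesis using Sigma0_succ_UN[of \<xi> "\<lambda>n. if n = 0 then A else B"] assms by simp
qed

lemma Sigma0_succ_Int:
  assumes A: "Sigma0_succ (\<xi>::'i::wellorder) (A::'a::metric_space set)" and B: "Sigma0_succ \<xi> B"
  shows "Sigma0_succ \<xi> (A \<inter> B)"
proof -
  obtain \<eta>a :: "nat \<Rightarrow> 'i" and An :: "nat \<Rightarrow> 'a set"
    where a: "\<And>n. \<eta>a n \<le> \<xi> \<and> Sigma0 (\<eta>a n) (- An n)" "A = (\<Union>n. An n)"
    using Sigma0_succE[OF A] by metis
  obtain \<eta>b :: "nat \<Rightarrow> 'i" and Bn :: "nat \<Rightarrow> 'a set"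
    where b: "\<And>n. \<eta>b n \<le> \<xi> \<and> Sigma0 (\<eta>b n) (- Bn n)" "B = (\<Union>n. Bn n)"
    using Sigma0_succE[OF B] by metis
  have "Sigma0_succ \<xi> (An n \<inter> Bn m)" for n m
  proof (rule Sigma0_succ_if_Pi0)
    let ?\<zeta> = "max (\<eta>a n) (\<eta>b m)"
    have "Sigma0 ?\<zeta> (- An n)" "Sigma0 ?\<zeta> (- Bn m)"
      using a(1) b(1) Sigma0_mono by (metis max.cobounded1, metis max.cobounded2)
    then show "Sigma0 ?\<zeta> (- (An n \<inter> Bn m))" by (simp add: Sigma0_Un)
    show "?\<zeta> \<le> \<xi>" using a(1) b(1) by simp
  qed
  then have "Sigma0_succ \<xi> (\<Union>n. \<Union>m. An n \<inter> Bn m)" by (intro Sigma0_succ_UN)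
  moreover have "A \<inter> B = (\<Union>n. \<Union>m. An n \<inter> Bn m)" using a(2) b(2) by auto
  ultimately show ?thesis by simp
qed

lemma Sigma0_succ_INT_finite:
  assumes "\<not> ord_zero (\<xi>::'i::wellorder)" "finite I" "\<And>i. i \<in> I \<Longrightarrow> Sigma0_succ \<xi> (A i :: 'a::metric_space set)"
  shows "Sigma0_succ \<xi> (\<Inter>i\<in>I. A i)"
  using assms(2,3)
proof (induction I rule: finite_induct)
  case empty
  show ?case using Sigma0_succ_UNIV[OF assms(1)] by simp
next
  case (insert i I)
  then show ?case by (simp add: Sigma0_succ_Int)
qed

lemma Sigma0_succ_vimage_continuous:
  assumes "Sigma0_succ (\<xi>::'i::wellorder) (A::'b::topological_space set)"
    and "continuous_on UNIV (h::'a::topological_space \<Rightarrow> 'b)"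
  shows "Sigma0_succ \<xi> (h -` A)"
proof -
  obtain \<eta> :: "nat \<Rightarrow> 'i" and An :: "nat \<Rightarrow> 'b set"
    where a: "\<And>n. \<eta> n \<le> \<xi> \<and> Sigma0 (\<eta> n) (- An n)" "A = (\<Union>n. An n)"
    using Sigma0_succE[OF assms(1)] by metis
  have "\<And>n. Sigma0 (\<eta> n) (- (h -` An n))"
    using a(1) Sigma0_vimage_continuous[OF _ assms(2)] by (metis vimage_Compl)
  then show ?thesis unfolding a(2) vimage_UN using a(1) by (intro Sigma0_succI) auto
qed

lemma Sigma0_UN_Sigma0_succ:
  assumes "\<And>n. Sigma0_succ ((\<eta>::nat \<Rightarrow> 'i::wellorder) n) ((B::nat \<Rightarrow> 'a::topological_space set) n)"
    and "\<And>n. \<eta> n < \<xi>"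
  shows "Sigma0 \<xi> (\<Union>n. B n)"
proof -
  have "\<exists>\<theta> A. (\<forall>j::nat. \<theta> j \<le> \<eta> n \<and> Sigma0 (\<theta> j) (- A j)) \<and> B n = (\<Union>j. A j)" for n
    using assms(1)[of n] by (simp add: Sigma0_succ_iff)
  then obtain \<theta> :: "nat \<Rightarrow> nat \<Rightarrow> 'i" and A :: "nat \<Rightarrow> nat \<Rightarrow> 'a set"
    where A: "\<And>n j. \<theta> n j \<le> \<eta> n \<and> Sigma0 (\<theta> n j) (- A n j)" and B: "\<And>n. B n = (\<Union>j. A n j)"
    by metis
  have "Sigma0 \<xi> (\<Union>c. A (fst (prod_decode c)) (snd (prod_decode c)))"
    by (rule Sigma0_UN[where \<eta>="\<lambda>c. \<theta> (fst (prod_decode c)) (snd (prod_decode c))"])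
       (use A assms(2) in \<open>auto intro: le_less_trans\<close>)
  then show ?thesis unfolding B UN_UN_prod_decode .
qed

lemma Pi0_eq_INT_Sigma0_lower:
  fixes P :: "'a::metric_space set"
  assumes P: "Sigma0 (\<eta>::'i::wellorder) (- P)" and "\<eta> \<le> \<xi>" "\<not> ord_one \<xi>"
  shows "\<exists>\<theta> S. (\<forall>l::nat. \<theta> l < \<xi> \<and> Sigma0 (\<theta> l) (S l)) \<and> P = (\<Inter>l. S l)"
proof (cases "ord_one \<eta>")
  case True
  then have "\<eta> < \<xi>" using assms(2,3) order.order_iff_strict by blast
  moreover have "closed P" using Sigma0_ord_one_imp_open[OF P True] by (simp add: closed_open)
  ultimately show ?thesis using closed_eq_INT_thickenings True
    by (intro exI[where x="\<lambda>_. \<eta>"] exI[where x="\<lambda>n. \<Union>z\<in>P. ball z (1 / Suc n)"]) (auto intro!: Sigma0_open)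
next
  case False
  obtain \<theta> :: "nat \<Rightarrow> 'i" and A :: "nat \<Rightarrow> 'a set"
    where "\<And>n. \<theta> n < \<eta> \<and> Sigma0 (\<theta> n) (- A n)" "- P = (\<Union>n. A n)"
    using Sigma0_not_ord_oneE[OF P False] by metis
  then show ?thesis using assms(2)
    by (intro exI[where x=\<theta>] exI[where x="\<lambda>n. - A n"]) (auto intro: less_le_trans)
qed

lemma Sigma0_succ_eq_UN_INT_Sigma0_lower:
  fixes B :: "'a::metric_space set"
  assumes "Sigma0_succ (\<xi>::'i::wellorder) B" "\<not> ord_one \<xi>"
  shows "\<exists>\<theta> S. (\<forall>(j::nat) (l::nat). \<theta> j l < \<xi> \<and> Sigma0 (\<theta> j l) (S j l)) \<and> B = (\<Union>j. \<Inter>l. S j l)"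
proof -
  obtain \<eta> :: "nat \<Rightarrow> 'i" and A :: "nat \<Rightarrow> 'a set"
    where A: "\<And>n. \<eta> n \<le> \<xi> \<and> Sigma0 (\<eta> n) (- A n)" and B: "B = (\<Union>n. A n)"
    using Sigma0_succE[OF assms(1)] by metis
  have "\<exists>\<theta> S. (\<forall>l::nat. \<theta> l < \<xi> \<and> Sigma0 (\<theta> l) (S l)) \<and> A n = (\<Inter>l. S l)" for n
    by (rule Pi0_eq_INT_Sigma0_lower) (use A assms(2) in auto)
  then obtain \<theta> :: "nat \<Rightarrow> nat \<Rightarrow> 'i" and S :: "nat \<Rightarrow> nat \<Rightarrow> 'a set"
    where "\<And>n l. \<theta> n l < \<xi> \<and> Sigma0 (\<theta> n l) (S n l)" "\<And>n. A n = (\<Inter>l. S n l)"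
    by metis
  then show ?thesis unfolding B by (intro exI[of _ \<theta>] exI[of _ S]) auto
qed

definition Delta0_succ :: "'i::wellorder \<Rightarrow> 'a::topological_space set \<Rightarrow> bool" where
  "Delta0_succ \<xi> B \<longleftrightarrow> Sigma0_succ \<xi> B \<and> Sigma0_succ \<xi> (- B)"

lemma Delta0_succ_if_Sigma0:
  fixes B :: "'a::metric_space set"
  assumes "Sigma0 (\<eta>::'i::wellorder) B" "\<eta> \<le> \<xi>"
  shows "Delta0_succ \<xi> B"
  unfolding Delta0_succ_def
  using assms Sigma0_succ_if_Sigma0 Sigma0_succ_if_Pi0[of \<eta> "- B"] by simp

lemma Delta0_succ_if_Pi0:
  fixes B :: "'a::metric_space set"
  assumes "Sigma0 (\<eta>::'i::wellorder) (- B)" "\<eta> \<le> \<xi>"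
  shows "Delta0_succ \<xi> B"
  using Delta0_succ_if_Sigma0[OF assms] unfolding Delta0_succ_def by simp

lemma Delta0_succ_Compl: "Delta0_succ \<xi> B \<Longrightarrow> Delta0_succ \<xi> (- B)"
  unfolding Delta0_succ_def by simp

lemma Delta0_succ_Int:
  fixes A B :: "'a::metric_space set"
  shows "Delta0_succ (\<xi>::'i::wellorder) A \<Longrightarrow> Delta0_succ \<xi> B \<Longrightarrow> Delta0_succ \<xi> (A \<inter> B)"
  unfolding Delta0_succ_def by (simp add: Sigma0_succ_Int Sigma0_succ_Un)

lemma Delta0_succ_Un:
  fixes A B :: "'a::metric_space set"
  shows "Delta0_succ (\<xi>::'i::wellorder) A \<Longrightarrow> Delta0_succ \<xi> B \<Longrightarrow> Delta0_succ \<xi> (A \<union> B)"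
  unfolding Delta0_succ_def by (simp add: Sigma0_succ_Int Sigma0_succ_Un)

lemma Delta0_succ_UNIV: "\<not> ord_zero (\<xi>::'i::wellorder) \<Longrightarrow> Delta0_succ \<xi> (UNIV::'a::metric_space set)"
  and Delta0_succ_empty: "\<not> ord_zero (\<xi>::'i::wellorder) \<Longrightarrow> Delta0_succ \<xi> ({}::'a::metric_space set)"
  unfolding Delta0_succ_def by (simp_all add: Sigma0_succ_UNIV Sigma0_succ_empty)

lemma Delta0_succ_if_saturated:
  fixes S :: "'a::metric_space set"
  assumes "\<not> ord_zero (\<xi>::'i::wellorder)" "finite F" "\<And>T. T \<in> F \<Longrightarrow> Delta0_succ \<xi> T"
    and "\<And>x y. (\<And>T. T \<in> F \<Longrightarrow> x \<in> T \<longleftrightarrow> y \<in> T) \<Longrightarrow> x \<in> S \<Longrightarrow> y \<in> S"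
  shows "Delta0_succ \<xi> S"
  using assms(2-4)
proof (induction F arbitrary: S rule: finite_induct)
  case empty
  then have "S = {} \<or> S = UNIV" by blast
  then show ?case using Delta0_succ_UNIV[OF assms(1)] Delta0_succ_empty[OF assms(1)] by blast
next
  case (insert T F)
  define S1 where "S1 = {x. \<exists>y\<in>S. y \<in> T \<and> (\<forall>T'\<in>F. x \<in> T' \<longleftrightarrow> y \<in> T')}"
  define S2 where "S2 = {x. \<exists>y\<in>S. y \<notin> T \<and> (\<forall>T'\<in>F. x \<in> T' \<longleftrightarrow> y \<in> T')}"
  have "Delta0_succ \<xi> S1"
    by (rule insert.IH) (use insert.prems(1) in simp, unfold S1_def, blast)
  moreover have "Delta0_succ \<xi> S2"
    by (rule insert.IH) (use insert.prems(1) in simp, unfold S2_def, blast)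
  moreover have "Delta0_succ \<xi> T" using insert.prems(1) by simp
  ultimately have "Delta0_succ \<xi> ((T \<inter> S1) \<union> (- T \<inter> S2))"
    by (intro Delta0_succ_Un Delta0_succ_Int Delta0_succ_Compl)
  moreover have "S = (T \<inter> S1) \<union> (- T \<inter> S2)"
  proof
    show "S \<subseteq> (T \<inter> S1) \<union> (- T \<inter> S2)" unfolding S1_def S2_def by blast
    show "(T \<inter> S1) \<union> (- T \<inter> S2) \<subseteq> S"
    proof
      fix x assume "x \<in> (T \<inter> S1) \<union> (- T \<inter> S2)"
      then obtain y where "y \<in> S" "x \<in> T \<longleftrightarrow> y \<in> T" "\<forall>T'\<in>F. x \<in> T' \<longleftrightarrow> y \<in> T'"
        unfolding S1_def S2_def by blast
      then show "x \<in> S" using insert.prems(2)[of y x] by blast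
    qed
  qed
  ultimately show ?case by simp
qed

section \<open>Measurability of Baire class functions and of uniform limits\<close>

definition Sigma0_succ_measurable :: "'i::wellorder \<Rightarrow> ('a::topological_space \<Rightarrow> 'b::topological_space) \<Rightarrow> bool" where
  "Sigma0_succ_measurable \<xi> f \<longleftrightarrow> (\<forall>U. open U \<longrightarrow> Sigma0_succ \<xi> (f -` U))"

lemma vimage_open_pointwise_limit:
  fixes f :: "'a \<Rightarrow> 'b::metric_space"
  assumes lim: "\<And>x. (\<lambda>n. fs n x) \<longlonglongrightarrow> f x" and "open U"
  shows "f -` U = (\<Union>m. \<Union>N. - (\<Union>n. fs (n + N) -` (\<Union>z\<in>-U. ball z (1 / Suc m))))"
    (is "_ = (\<Union>m. \<Union>N. - (\<Union>n. fs (n + N) -` ?G m))")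
proof
  show "f -` U \<subseteq> (\<Union>m. \<Union>N. - (\<Union>n. fs (n + N) -` ?G m))"
  proof
    fix x assume "x \<in> f -` U"
    then obtain e where e: "e > 0" "ball (f x) e \<subseteq> U" using \<open>open U\<close> open_contains_ball by blast
    obtain m where m: "1 / real (Suc m) < e / 2" using e(1) nat_approx_posE half_gt_zero by blast
    obtain N where N: "\<And>n. n \<ge> N \<Longrightarrow> dist (fs n x) (f x) < 1 / Suc m"
      using lim[of x] unfolding lim_sequentially by (meson of_nat_0_less_iff zero_less_Suc zero_less_divide_1_iff)
    have "fs (n + N) x \<notin> ?G m" for n
    proof
      assume "fs (n + N) x \<in> ?G m"
      then obtain z where z: "z \<notin> U" "dist z (fs (n + N) x) < 1 / Suc m" by auto
      have "dist z (f x) \<le> dist z (fs (n + N) x) + dist (fs (n + N) x) (f x)" by (rule dist_triangle)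
      also have "\<dots> < e" using z(2) N[of "n + N"] m by simp
      finally show False using e z by (auto simp: dist_commute)
    qed
    then have "x \<in> - (\<Union>n. fs (n + N) -` ?G m)" by simp
    then show "x \<in> (\<Union>m. \<Union>N. - (\<Union>n. fs (n + N) -` ?G m))" by (intro UN_I[OF UNIV_I])
  qed
  show "(\<Union>m. \<Union>N. - (\<Union>n. fs (n + N) -` ?G m)) \<subseteq> f -` U"
  proof
    fix x assume "x \<in> (\<Union>m. \<Union>N. - (\<Union>n. fs (n + N) -` ?G m))"
    then obtain m N where mN: "\<And>n. fs (n + N) x \<in> - ?G m" by auto
    have closed: "closed (- ?G m)" by (rule closed_Compl) auto
    have "f x \<in> - ?G m"
      by (rule closed_sequentially[OF closed mN LIMSEQ_ignore_initial_segment[OF lim]])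
    then have "f x \<notin> ?G m" by simp
    moreover have "f x \<in> ?G m" if "f x \<notin> U" using that by (intro UN_I[of "f x"]) auto
    ultimately show "x \<in> f -` U" by blast
  qed
qed

lemma baire_class_imp_Sigma0_succ_measurable:
  "baire_class (\<xi>::'i::wellorder) (f::'a::metric_space \<Rightarrow> 'b::metric_space) \<Longrightarrow> Sigma0_succ_measurable \<xi> f"
  unfolding Sigma0_succ_measurable_def
proof (induction rule: baire_class.induct)
  case (baire_lim \<xi> \<eta> fs f)
  show ?case
  proof (intro allI impI)
    fix U :: "'b set" assume "open U"
    let ?G = "\<lambda>m. \<Union>z\<in>-U. ball z (1 / Suc m)"
    have "open (?G m)" for m by auto
    then have "Sigma0 \<xi> (\<Union>n. fs (n + N) -` ?G m)" for m N
      by (intro Sigma0_UN_Sigma0_succ[where \<eta>="\<lambda>n. \<eta> (n + N)"]) (use baire_lim.IH in auto)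
    then have "Sigma0_succ \<xi> (- (\<Union>n. fs (n + N) -` ?G m))" for m N
      by (intro Sigma0_succ_if_Pi0[of \<xi>]) auto
    moreover have "f -` U = (\<Union>m. \<Union>N. - (\<Union>n. fs (n + N) -` ?G m))"
      using baire_lim.hyps(3) \<open>open U\<close> by (intro vimage_open_pointwise_limit) auto
    ultimately show "Sigma0_succ \<xi> (f -` U)" by (simp add: Sigma0_succ_UN)
  qed
qed blast

lemma vimage_open_uniform_approximation:
  fixes f :: "'a \<Rightarrow> 'b::metric_space"
  assumes approx: "\<And>m x. dist (g m x) (f x) < 1 / Suc m" and "open U"
  shows "f -` U = (\<Union>m. g m -` (\<Union>y\<in>{y. ball y (3 / Suc m) \<subseteq> U}. ball y (1 / Suc m)))"
proof
  show "f -` U \<subseteq> (\<Union>m. g m -` (\<Union>y\<in>{y. ball y (3 / Suc m) \<subseteq> U}. ball y (1 / Suc m)))"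
  proof
    fix x assume "x \<in> f -` U"
    then obtain e where e: "e > 0" "ball (f x) e \<subseteq> U" using \<open>open U\<close> open_contains_ball by blast
    obtain m where "1 / real (Suc m) < e / 3" using e(1) nat_approx_posE by (metis divide_pos_pos zero_less_numeral)
    then have "3 / real (Suc m) < e" by (simp add: field_simps)
    then have "ball (f x) (3 / Suc m) \<subseteq> U" using e(2) by (meson order.trans less_imp_le subset_ball)
    moreover have "g m x \<in> ball (f x) (1 / Suc m)" using approx[of m x] by (simp add: dist_commute)
    ultimately show "x \<in> (\<Union>m. g m -` (\<Union>y\<in>{y. ball y (3 / Suc m) \<subseteq> U}. ball y (1 / Suc m)))" by blast
  qed
  show "(\<Union>m. g m -` (\<Union>y\<in>{y. ball y (3 / Suc m) \<subseteq> U}. ball y (1 / Suc m))) \<subseteq> f -` U"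
  proof
    fix x assume "x \<in> (\<Union>m. g m -` (\<Union>y\<in>{y. ball y (3 / Suc m) \<subseteq> U}. ball y (1 / Suc m)))"
    then obtain m y where y: "ball y (3 / Suc m) \<subseteq> U" "dist y (g m x) < 1 / Suc m" by auto
    have "dist y (f x) \<le> dist y (g m x) + dist (g m x) (f x)" by (rule dist_triangle)
    also have "\<dots> < 3 / Suc m" using y(2) approx[of m x] by (simp add: field_simps)
    finally show "x \<in> f -` U" using y(1) by auto
  qed
qed

lemma Sigma0_succ_measurable_uniform_limit:
  fixes f :: "'a::metric_space \<Rightarrow> 'b::metric_space"
  assumes "\<not> ord_zero (\<xi>::'i::wellorder)" and ul: "uniform_limit UNIV fs f sequentially"
    and meas: "\<And>k. Sigma0_succ_measurable \<xi> (fs k)"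
  shows "Sigma0_succ_measurable \<xi> f"
  unfolding Sigma0_succ_measurable_def
proof (intro allI impI)
  fix U :: "'b set" assume "open U"
  have "\<exists>K. \<forall>x. dist (fs K x) (f x) < 1 / Suc m" for m
    using ul unfolding uniform_limit_sequentially_iff by (metis of_nat_0_less_iff order_refl zero_less_Suc zero_less_divide_1_iff UNIV_I)
  then obtain K where K: "\<And>m x. dist (fs (K m) x) (f x) < 1 / Suc m" by metis
  have "Sigma0_succ \<xi> (fs (K m) -` (\<Union>y\<in>{y. ball y (3 / Suc m) \<subseteq> U}. ball y (1 / Suc m)))" for m
    using meas unfolding Sigma0_succ_measurable_def by (simp add: open_UN)
  then show "Sigma0_succ \<xi> (f -` U)"
    unfolding vimage_open_uniform_approximation[OF K \<open>open U\<close>] by (intro Sigma0_succ_UN)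
qed

section \<open>Locally constant and locally continuous functions\<close>

lemma Delta_succ_function_imp_Sigma0_succ_measurable:
  fixes g :: "'a::topological_space \<Rightarrow> 'b::metric_space"
  assumes "\<not> ord_zero (\<xi>::'i::wellorder)" "Delta_succ_function \<xi> g"
  shows "Sigma0_succ_measurable \<xi> g"
  using assms Sigma0_succ_open unfolding Delta_succ_function_def Sigma0_succ_measurable_def by blast

lemma const_fun_imp_lipschitz_fun: "const_fun h \<Longrightarrow> lipschitz_fun (h::'a::metric_space \<Rightarrow> 'b::metric_space)"
  unfolding const_fun_def lipschitz_fun_def using lipschitz_on_constant by blast

lemma lipschitz_fun_imp_cont_fun: "lipschitz_fun h \<Longrightarrow> cont_fun (h::'a::metric_space \<Rightarrow> 'b::metric_space)"
  unfolding cont_fun_def lipschitz_fun_def using lipschitz_on_continuous_on by blast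

lemma locally_on_Sigma_succ_partition_mono:
  assumes "\<And>h. F h \<Longrightarrow> G h" "locally_on_Sigma_succ_partition \<xi> F g"
  shows "locally_on_Sigma_succ_partition \<xi> G g"
  using assms unfolding locally_on_Sigma_succ_partition_def locally_in_on_def by blast

lemma locally_continuous_imp_Delta_succ_function:
  fixes g :: "'a::metric_space \<Rightarrow> 'b::metric_space"
  assumes nz: "\<not> ord_zero (\<xi>::'i::wellorder)" and "locally_on_Sigma_succ_partition \<xi> cont_fun g"
  shows "Delta_succ_function \<xi> g"
  unfolding Delta_succ_function_def
proof (intro allI impI)
  fix A :: "'b set" assume A: "Sigma0_succ \<xi> A"
  obtain N C where P: "Sigma_succ_partition \<xi> N C" and "locally_in_on cont_fun N C g"
    using assms(2) unfolding locally_on_Sigma_succ_partition_def by blast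
  then obtain H where H: "\<And>n. enat n < N \<Longrightarrow> cont_fun (H n) \<and> (\<forall>x\<in>C n. g x = H n x)"
    unfolding locally_in_on_def by metis
  let ?D = "\<lambda>n. if enat n < N then C n \<inter> H n -` A else {}"
  have eq: "g -` A = (\<Union>n. ?D n)"
  proof
    show "g -` A \<subseteq> (\<Union>n. ?D n)"
    proof
      fix x assume "x \<in> g -` A"
      moreover obtain n where "enat n < N" "x \<in> C n"
        using P unfolding Sigma_succ_partition_def by blast
      ultimately show "x \<in> (\<Union>n. ?D n)" using H by (intro UN_I[of n]) auto
    qed
    show "(\<Union>n. ?D n) \<subseteq> g -` A" using H by (auto split: if_splits)
  qed
  have "Sigma0_succ \<xi> (?D n)" for n
  proof (cases "enat n < N")
    case True
    then have "Sigma0_succ \<xi> (C n)" using P unfolding Sigma_succ_partition_def by blast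
    moreover have "Sigma0_succ \<xi> (H n -` A)"
      using Sigma0_succ_vimage_continuous[OF A] H[OF True] unfolding cont_fun_def by blast
    ultimately show ?thesis using True by (simp add: Sigma0_succ_Int)
  qed (simp add: Sigma0_succ_empty[OF nz])
  then show "Sigma0_succ \<xi> (g -` A)" unfolding eq by (rule Sigma0_succ_UN)
qed

lemma ex_enat_bij_betw_nonempty:
  fixes S :: "nat set"
  assumes "S \<noteq> {}"
  obtains N :: enat and e :: "nat \<Rightarrow> nat" where "1 \<le> N" "bij_betw e {n. enat n < N} S"
proof (cases "finite S")
  case True
  then obtain e where "bij_betw e {0..<card S} S" using ex_bij_betw_nat_finite by blast
  moreover have "{n. enat n < enat (card S)} = {0..<card S}" by auto
  moreover have "1 \<le> enat (card S)" using True assms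
    by (metis card_0_eq enat_ord_simps(1) less_one linorder_not_less one_enat_def)
  ultimately show thesis using that by metis
next
  case False
  then have "bij_betw (enumerate S) UNIV S" by (rule bij_enumerate)
  moreover have "{n. enat n < \<infinity>} = UNIV" by auto
  ultimately show thesis using that by (metis enat_ord_code(3))
qed

lemma locally_on_Sigma_succ_partitionI:
  fixes D :: "nat \<Rightarrow> 'a::topological_space set"
  assumes Sigma: "\<And>c. Sigma0_succ (\<xi>::'i::wellorder) (D c)"
    and disj: "disjoint_family D"
    and cover: "(\<Union>c. D c) = UNIV"
    and local: "\<And>c. \<exists>h. F h \<and> (\<forall>x\<in>D c. g x = h x)"
  shows "locally_on_Sigma_succ_partition \<xi> F g"
proof -
  define S where "S = {c. D c \<noteq> {}}"
  have "(\<Union>c. D c) \<noteq> {}" using cover by simp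
  then have "S \<noteq> {}" unfolding S_def by auto
  then obtain N :: enat and e :: "nat \<Rightarrow> nat" where "1 \<le> N" and bij: "bij_betw e {n. enat n < N} S"
    by (rule ex_enat_bij_betw_nonempty)
  have "Sigma_succ_partition \<xi> N (\<lambda>n. D (e n))"
    unfolding Sigma_succ_partition_def
  proof (intro conjI allI impI)
    show "1 \<le> N" by fact
    fix n assume "enat n < N"
    then show "D (e n) \<noteq> {}" using bij bij_betw_apply unfolding S_def by fastforce
    show "Sigma0_succ \<xi> (D (e n))" by (rule Sigma)
  next
    fix m n assume "enat m < N" "enat n < N" "m \<noteq> n"
    then have "e m \<noteq> e n" using bij unfolding bij_betw_def inj_on_def by blast
    then show "D (e m) \<inter> D (e n) = {}" using disj unfolding disjoint_family_on_def by blast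
  next
    have "x \<in> \<Union> {D (e n) |n. enat n < N}" for x
    proof -
      obtain c where c: "x \<in> D c" using cover by blast
      then have "c \<in> S" unfolding S_def by auto
      then obtain n where "enat n < N" "e n = c" using bij unfolding bij_betw_def by auto
      then show ?thesis using c by blast
    qed
    then show "\<Union> {D (e n) |n. enat n < N} = UNIV" by blast
  qed
  moreover have "locally_in_on F N (\<lambda>n. D (e n)) g"
    unfolding locally_in_on_def using local by blast
  ultimately show ?thesis unfolding locally_on_Sigma_succ_partition_def by blast
qed

lemma locally_constant_approximation_if_Delta_cover:
  fixes f :: "'a::metric_space \<Rightarrow> 'b::metric_space" and P :: "nat \<Rightarrow> 'a set"
  assumes "\<not> ord_zero (\<xi>::'i::wellorder)"
    and Delta: "\<And>c. Delta0_succ \<xi> (P c)" and cover: "(\<Union>c. P c) = UNIV"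
    and close: "\<And>c x. x \<in> P c \<Longrightarrow> dist (y c) (f x) < r"
  shows "\<exists>g. (\<forall>x. dist (g x) (f x) < r) \<and> locally_on_Sigma_succ_partition \<xi> const_fun g"
proof -
  define D where "D = disjointed P"
  define g where "g x = y (THE c. x \<in> D c)" for x
  have cover_D: "(\<Union>c. D c) = UNIV" unfolding D_def UN_disjointed_eq by (rule cover)
  have g: "g x = y c" if "x \<in> D c" for x c
  proof -
    have "(THE c. x \<in> D c) = c"
    proof (rule the_equality)
      fix c' assume "x \<in> D c'"
      then show "c' = c"
        using that disjoint_family_disjointed[of P] unfolding D_def disjoint_family_on_def by blast
    qed (rule that)
    then show ?thesis unfolding g_def by simp
  qed
  have "Sigma0_succ \<xi> (D c)" for c
  proof -
    have "D c = P c \<inter> (\<Inter>i\<in>{0..<c}. - P i)" unfolding D_def disjointed_def by blast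
    moreover have "Sigma0_succ \<xi> (\<Inter>i\<in>{0..<c}. - P i)"
      using Delta unfolding Delta0_succ_def by (intro Sigma0_succ_INT_finite assms(1)) auto
    ultimately show ?thesis using Delta unfolding Delta0_succ_def by (simp add: Sigma0_succ_Int)
  qed
  moreover have "\<exists>h. const_fun h \<and> (\<forall>x\<in>D c. g x = h x)" for c
    by (intro exI[of _ "\<lambda>_. y c"]) (auto simp: const_fun_def g)
  ultimately have "locally_on_Sigma_succ_partition \<xi> const_fun g"
    using cover_D disjoint_family_disjointed unfolding D_def by (intro locally_on_Sigma_succ_partitionI)
  moreover have "dist (g x) (f x) < r" for x
  proof -
    obtain c where "x \<in> D c" using cover_D by blast
    moreover have "D c \<subseteq> P c" unfolding D_def by (rule disjointed_subset)
    ultimately show ?thesis using close g by auto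
  qed
  ultimately show ?thesis by blast
qed

lemma separable_imp_dense_sequence:
  assumes "\<exists>D::'b set. countable D \<and> closure D = UNIV"
  obtains d :: "nat \<Rightarrow> 'b::metric_space" where "\<And>y r. r > 0 \<Longrightarrow> \<exists>i. dist (d i) y < r"
proof -
  obtain D :: "'b set" where D: "countable D" "closure D = UNIV" using assms by blast
  have "\<exists>i. dist (from_nat_into D i) y < r" if "r > 0" for y r
  proof -
    obtain z where "z \<in> D" "dist z y < r" using D(2) \<open>r > 0\<close> closure_approachable by blast
    moreover obtain i where "from_nat_into D i = z" using from_nat_into_surj[OF D(1) \<open>z \<in> D\<close>] by blast
    ultimately show ?thesis by auto
  qed
  then show thesis by (rule that)
qed

lemma Sigma0_succ_measurable_imp_near_locally_constant:
  fixes f :: "'a::metric_space \<Rightarrow> 'b::metric_space" and d :: "nat \<Rightarrow> 'b"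
  assumes nz: "\<not> ord_zero (\<xi>::'i::wellorder)" and meas: "Sigma0_succ_measurable \<xi> f"
    and dense: "\<And>y r. r > 0 \<Longrightarrow> \<exists>i. dist (d i) y < r" and "r > 0"
  shows "\<exists>g. (\<forall>x. dist (g x) (f x) < r) \<and> locally_on_Sigma_succ_partition \<xi> const_fun g"
proof -
  have "\<exists>\<eta> A. (\<forall>j::nat. \<eta> j \<le> \<xi> \<and> Sigma0 (\<eta> j) (- A j)) \<and> f -` ball (d i) r = (\<Union>j. A j)" for i
    using meas unfolding Sigma0_succ_measurable_def Sigma0_succ_iff by simp
  then obtain \<eta> :: "nat \<Rightarrow> nat \<Rightarrow> 'i" and A :: "nat \<Rightarrow> nat \<Rightarrow> 'a set"
    where A: "\<And>i j. \<eta> i j \<le> \<xi> \<and> Sigma0 (\<eta> i j) (- A i j)"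
      and balls: "\<And>i. f -` ball (d i) r = (\<Union>j. A i j)"
    by metis
  show ?thesis
  proof (rule locally_constant_approximation_if_Delta_cover[OF nz])
    show "Delta0_succ \<xi> (A (fst (prod_decode c)) (snd (prod_decode c)))" for c
      using A by (blast intro: Delta0_succ_if_Pi0)
    have "x \<in> (\<Union>i. f -` ball (d i) r)" for x using dense[OF \<open>r > 0\<close>, of "f x"] by auto
    then show "(\<Union>c. A (fst (prod_decode c)) (snd (prod_decode c))) = UNIV"
      unfolding UN_UN_prod_decode[symmetric] balls[symmetric] by blast
    show "dist (d (fst (prod_decode c))) (f x) < r"
      if "x \<in> A (fst (prod_decode c)) (snd (prod_decode c))" for c x
      using that balls[of "fst (prod_decode c)"] by auto
  qed
qed

lemma Sigma0_succ_measurable_imp_uniform_limit_locally_constant: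
  fixes f :: "'a::metric_space \<Rightarrow> 'b::metric_space"
  assumes sep: "\<exists>D::'b set. countable D \<and> closure D = UNIV"
    and nz: "\<not> ord_zero (\<xi>::'i::wellorder)" and meas: "Sigma0_succ_measurable \<xi> f"
  shows "\<exists>fs. uniform_limit UNIV fs f sequentially \<and> (\<forall>k. locally_on_Sigma_succ_partition \<xi> const_fun (fs k))"
proof -
  obtain d :: "nat \<Rightarrow> 'b" where "\<And>y r. r > 0 \<Longrightarrow> \<exists>i. dist (d i) y < r"
    using separable_imp_dense_sequence[OF sep] by blast
  then have "\<exists>g. (\<forall>x. dist (g x) (f x) < 1 / Suc k) \<and> locally_on_Sigma_succ_partition \<xi> const_fun g" for k
    by (intro Sigma0_succ_measurable_imp_near_locally_constant[OF nz meas]) auto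
  then obtain fs where fs: "\<And>k x. dist (fs k x) (f x) < 1 / Suc k"
    and local: "\<And>k. locally_on_Sigma_succ_partition \<xi> const_fun (fs k)"
    by metis
  have "uniform_limit UNIV fs f sequentially"
    unfolding uniform_limit_sequentially_iff
  proof (intro allI impI)
    fix e :: real assume "e > 0"
    then obtain k0 where k0: "1 / real (Suc k0) < e" using nat_approx_posE by blast
    have "dist (fs k x) (f x) < e" if "k \<ge> k0" for k x
    proof -
      have "1 / real (Suc k) \<le> 1 / real (Suc k0)" using that by (simp add: frac_le)
      then show ?thesis using fs[of k x] k0 by linarith
    qed
    then show "\<exists>N. \<forall>n\<ge>N. \<forall>x\<in>UNIV. dist (fs n x) (f x) < e" by blast
  qed
  then show ?thesis using local by blast
qed

section \<open>Measurable functions are of Baire class\<close>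

text \<open>In the intended instance \<open>\<Inter>l. T k c l\<close> ranges over the pieces of
  \<open>f -` ball (d i) (1 / Suc k)\<close> for a dense sequence \<open>d\<close>, the code \<open>c\<close> pairing \<open>i\<close> with the
  index of the piece, and \<open>p k c = d i\<close>.\<close>

locale approximation_scheme =
  fixes f :: "'a::metric_space \<Rightarrow> 'b::metric_space"
    and T :: "nat \<Rightarrow> nat \<Rightarrow> nat \<Rightarrow> 'a set"
    and p :: "nat \<Rightarrow> nat \<Rightarrow> 'b"
  assumes exhaustive: "\<And>k x. \<exists>c. \<forall>l. x \<in> T k c l"
    and close: "\<And>k c x. (\<forall>l. x \<in> T k c l) \<Longrightarrow> dist (p k c) (f x) < 1 / Suc k"
begin

definition survives :: "nat \<Rightarrow> nat \<Rightarrow> 'a \<Rightarrow> nat \<Rightarrow> bool" where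
  "survives k m x c \<longleftrightarrow> (\<forall>l\<le>m. x \<in> T k c l)"

text \<open>If no code survives, \<open>LEAST\<close> returns an unspecified value that does not depend on \<open>x\<close>.\<close>

definition candidate :: "nat \<Rightarrow> nat \<Rightarrow> 'a \<Rightarrow> 'b" where
  "candidate k m x = p k (LEAST c. c < m \<and> survives k m x c)"

definition consistent :: "nat \<Rightarrow> 'a \<Rightarrow> nat \<Rightarrow> bool" where
  "consistent m x k \<longleftrightarrow>
     (\<forall>j\<le>k. \<forall>j'\<le>k. dist (candidate j m x) (candidate j' m x) < 1 / Suc j + 1 / Suc j')"

definition level :: "nat \<Rightarrow> 'a \<Rightarrow> nat" where
  "level m x = (GREATEST k. k \<le> m \<and> consistent m x k)"

definition approx :: "nat \<Rightarrow> 'a \<Rightarrow> 'b" where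
  "approx m x = candidate (level m x) m x"

lemma eventually_not_survives:
  assumes "\<not> (\<forall>l. x \<in> T k c l)"
  shows "\<forall>\<^sub>F m in sequentially. \<not> survives k m x c"
proof -
  obtain l0 where "x \<notin> T k c l0" using assms by blast
  then have "\<not> survives k m x c" if "m \<ge> l0" for m using that unfolding survives_def by blast
  then show ?thesis unfolding eventually_sequentially by blast
qed

lemma eventually_candidate_close: "\<forall>\<^sub>F m in sequentially. dist (candidate k m x) (f x) < 1 / Suc k"
proof -
  obtain c0 where c0: "\<forall>l. x \<in> T k c0 l" using exhaustive by blast
  have "\<forall>\<^sub>F m in sequentially. (\<forall>l. x \<in> T k c l) \<or> \<not> survives k m x c" for c
    using eventually_not_survives[of x k c] by (cases "\<forall>l. x \<in> T k c l") (auto elim: eventually_mono)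
  then have "\<forall>\<^sub>F m in sequentially. (\<forall>c\<in>{..c0}. (\<forall>l. x \<in> T k c l) \<or> \<not> survives k m x c) \<and> c0 < m"
    by (intro eventually_conj eventually_ball_finite eventually_gt_at_top) auto
  then show ?thesis
  proof (rule eventually_mono)
    fix m assume m: "(\<forall>c\<in>{..c0}. (\<forall>l. x \<in> T k c l) \<or> \<not> survives k m x c) \<and> c0 < m"
    define cs where "cs = (LEAST c. c < m \<and> survives k m x c)"
    have c0m: "c0 < m \<and> survives k m x c0" using m c0 unfolding survives_def by blast
    have "cs < m \<and> survives k m x cs" unfolding cs_def by (rule LeastI) (rule c0m)
    moreover have "cs \<le> c0" unfolding cs_def by (rule Least_le) (rule c0m)
    ultimately have "\<forall>l. x \<in> T k cs l" using m by auto
    then show "dist (candidate k m x) (f x) < 1 / Suc k" unfolding candidate_def cs_def[symmetric] by (rule close)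
  qed
qed

lemma level_le: "level m x \<le> m" and consistent_level: "consistent m x (level m x)"
proof -
  have "0 \<le> m \<and> consistent m x 0" unfolding consistent_def by simp
  then have "level m x \<le> m \<and> consistent m x (level m x)"
    unfolding level_def by (rule GreatestI_nat[where b=m]) simp_all
  then show "level m x \<le> m" "consistent m x (level m x)" by auto
qed

lemma le_level: "k \<le> m \<Longrightarrow> consistent m x k \<Longrightarrow> k \<le> level m x"
  unfolding level_def by (rule Greatest_le_nat[where b=m]) auto

text \<open>Eventually the candidates of all levels \<open>j \<le> K\<close> lie within \<open>1 / Suc j\<close> of \<open>f x\<close>, hence are
  mutually consistent; so the chosen level is at least \<open>K\<close>, and its candidate lies within
  \<open>2 / Suc K\<close> of the level-\<open>K\<close> candidate.\<close>

lemma approx_tendsto: "(\<lambda>m. approx m x) \<longlonglongrightarrow> f x"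
  unfolding tendsto_iff
proof (intro allI impI)
  fix e :: real assume "e > 0"
  then obtain K where K: "1 / real (Suc K) < e / 3" using nat_approx_posE
    by (metis divide_pos_pos zero_less_numeral)
  have "\<forall>\<^sub>F m in sequentially. (\<forall>j\<in>{..K}. dist (candidate j m x) (f x) < 1 / Suc j) \<and> K \<le> m"
    by (intro eventually_conj eventually_ball_finite eventually_ge_at_top ballI eventually_candidate_close) auto
  then show "\<forall>\<^sub>F m in sequentially. dist (approx m x) (f x) < e"
  proof (rule eventually_mono)
    fix m assume m: "(\<forall>j\<in>{..K}. dist (candidate j m x) (f x) < 1 / Suc j) \<and> K \<le> m"
    have "consistent m x K" unfolding consistent_def
    proof (intro allI impI)
      fix j j' assume "j \<le> K" "j' \<le> K"
      then have "dist (candidate j m x) (f x) < 1 / Suc j" "dist (candidate j' m x) (f x) < 1 / Suc j'"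
        using m by auto
      then show "dist (candidate j m x) (candidate j' m x) < 1 / Suc j + 1 / Suc j'"
        using dist_triangle2[of "candidate j m x" "candidate j' m x" "f x"] by linarith
    qed
    then have "K \<le> level m x" using m le_level by blast
    then have "dist (approx m x) (candidate K m x) < 1 / Suc (level m x) + 1 / Suc K"
      using consistent_level unfolding approx_def consistent_def by blast
    moreover have "1 / real (Suc (level m x)) \<le> 1 / Suc K" using \<open>K \<le> level m x\<close> by (simp add: frac_le)
    moreover have "dist (candidate K m x) (f x) < 1 / Suc K" using m by auto
    ultimately show "dist (approx m x) (f x) < e"
      using K dist_triangle[of "approx m x" "f x" "candidate K m x"] by linarith
  qed
qed

lemma approx_eq_if_same_membership:
  assumes "\<And>k c l. k \<le> m \<Longrightarrow> c < m \<Longrightarrow> l \<le> m \<Longrightarrow> x \<in> T k c l \<longleftrightarrow> y \<in> T k c l"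
  shows "approx m x = approx m y"
proof -
  have "(\<lambda>c. c < m \<and> survives k m x c) = (\<lambda>c. c < m \<and> survives k m y c)" if "k \<le> m" for k
    using assms that unfolding survives_def by blast
  then have candidate: "candidate k m x = candidate k m y" if "k \<le> m" for k
    using that unfolding candidate_def by simp
  have "consistent m x k = consistent m y k" if "k \<le> m" for k
  proof -
    have "\<forall>j\<le>k. candidate j m x = candidate j m y" using candidate that by auto
    then show ?thesis unfolding consistent_def by simp
  qed
  then have "(\<lambda>k. k \<le> m \<and> consistent m x k) = (\<lambda>k. k \<le> m \<and> consistent m y k)" by auto
  then have "level m x = level m y" unfolding level_def by simp
  then show ?thesis unfolding approx_def using candidate level_le by metis
qed

lemma Delta0_succ_vimage_approx:
  assumes "\<not> ord_zero (\<eta>::'i::wellorder)"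
    and "\<And>k c l. k \<le> m \<Longrightarrow> c \<le> m \<Longrightarrow> l \<le> m \<Longrightarrow> Delta0_succ \<eta> (T k c l)"
  shows "Delta0_succ \<eta> (approx m -` U)"
proof (rule Delta0_succ_if_saturated[OF assms(1)])
  let ?F = "(\<lambda>(k, c, l). T k c l) ` ({..m} \<times> {..m} \<times> {..m})"
  show "finite ?F" by simp
  show "Delta0_succ \<eta> B" if "B \<in> ?F" for B using that assms(2) by auto
  fix x y assume same: "\<And>B. B \<in> ?F \<Longrightarrow> x \<in> B \<longleftrightarrow> y \<in> B" and "x \<in> approx m -` U"
  moreover have "approx m x = approx m y"
  proof (rule approx_eq_if_same_membership)
    fix k c l assume "k \<le> m" "c < m" "l \<le> m"
    then have "T k c l \<in> ?F" by force
    then show "x \<in> T k c l \<longleftrightarrow> y \<in> T k c l" by (rule same)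
  qed
  ultimately show "y \<in> approx m -` U" by simp
qed

end

lemma Sigma0_succ_measurable_approximation_scheme:
  fixes f :: "'a::metric_space \<Rightarrow> 'b::metric_space"
  assumes sep: "\<exists>D::'b set. countable D \<and> closure D = UNIV"
    and meas: "Sigma0_succ_measurable \<xi> f" and "\<not> ord_one \<xi>"
  obtains T p and \<theta> :: "nat \<Rightarrow> nat \<Rightarrow> nat \<Rightarrow> 'i::wellorder"
  where "approximation_scheme f T p" "\<And>k c l. \<theta> k c l < \<xi> \<and> Sigma0 (\<theta> k c l) (T k c l)"
proof -
  obtain d :: "nat \<Rightarrow> 'b" where dense: "\<And>y r. r > 0 \<Longrightarrow> \<exists>i. dist (d i) y < r"
    using separable_imp_dense_sequence[OF sep] by blast
  have "\<forall>k i. \<exists>\<theta> S. (\<forall>(j::nat) (l::nat). \<theta> j l < \<xi> \<and> Sigma0 (\<theta> j l) (S j l))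
      \<and> f -` ball (d i) (1 / Suc k) = (\<Union>j. \<Inter>l. S j l)"
    using meas \<open>\<not> ord_one \<xi>\<close> unfolding Sigma0_succ_measurable_def
    by (intro allI Sigma0_succ_eq_UN_INT_Sigma0_lower) simp_all
  then obtain \<theta> :: "nat \<Rightarrow> nat \<Rightarrow> nat \<Rightarrow> nat \<Rightarrow> 'i" and S :: "nat \<Rightarrow> nat \<Rightarrow> nat \<Rightarrow> nat \<Rightarrow> 'a set"
    where S: "\<And>k i j l. \<theta> k i j l < \<xi> \<and> Sigma0 (\<theta> k i j l) (S k i j l)"
      and balls: "\<And>k i. f -` ball (d i) (1 / Suc k) = (\<Union>j. \<Inter>l. S k i j l)"
    by metis
  define T where "T k c l = S k (fst (prod_decode c)) (snd (prod_decode c)) l" for k c l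
  define p where "p k c = d (fst (prod_decode c))" for k c :: nat
  have "approximation_scheme f T p"
  proof
    fix k x
    obtain i where "dist (d i) (f x) < 1 / Suc k" using dense[of "1 / Suc k" "f x"] by auto
    then have "x \<in> f -` ball (d i) (1 / Suc k)" by simp
    then obtain j where "\<forall>l. x \<in> S k i j l" unfolding balls by blast
    then show "\<exists>c. \<forall>l. x \<in> T k c l" unfolding T_def by (intro exI[of _ "prod_encode (i, j)"]) simp
  next
    fix k c x assume "\<forall>l. x \<in> T k c l"
    then have "x \<in> f -` ball (d (fst (prod_decode c))) (1 / Suc k)" unfolding balls T_def by blast
    then show "dist (p k c) (f x) < 1 / Suc k" unfolding p_def by simp
  qed
  moreover have "\<theta> k (fst (prod_decode c)) (snd (prod_decode c)) l < \<xi>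
      \<and> Sigma0 (\<theta> k (fst (prod_decode c)) (snd (prod_decode c)) l) (T k c l)" for k c l
    using S unfolding T_def by blast
  ultimately show thesis by (rule that)
qed

text \<open>The stage-\<open>m\<close> approximant depends only on the sets \<open>T k c l\<close> with \<open>k, c, l \<le> m\<close>; they
  lie in classes below \<open>\<xi>\<close>, so the induction hypothesis applies at their largest class \<open>Z m\<close>.\<close>

lemma Sigma0_succ_measurable_imp_baire_class:
  fixes f :: "'a::metric_space \<Rightarrow> 'b::metric_space"
  assumes sep: "\<exists>D::'b set. countable D \<and> closure D = UNIV"
  shows "\<not> ord_zero (\<xi>::'i::wellorder) \<Longrightarrow> Sigma0_succ_measurable \<xi> f \<Longrightarrow> baire_class \<xi> f"
proof (induction \<xi> arbitrary: f rule: less_induct)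
  case (less \<xi> f)
  show ?case
  proof (cases "ord_one \<xi>")
    case True
    then show ?thesis using less.prems by (intro baire_one) (auto simp: Sigma0_succ_measurable_def)
  next
    case False
    obtain T p and \<theta> :: "nat \<Rightarrow> nat \<Rightarrow> nat \<Rightarrow> 'i" where "approximation_scheme f T p"
      and \<theta>: "\<And>k c l. \<theta> k c l < \<xi> \<and> Sigma0 (\<theta> k c l) (T k c l)"
      using Sigma0_succ_measurable_approximation_scheme[OF sep less.prems(2) False] by metis
    interpret approximation_scheme f T p by fact
    define Z where "Z m = Max ((\<lambda>(k, c, l). \<theta> k c l) ` ({..m} \<times> {..m} \<times> {..m}))" for m
    have Z: "Z m < \<xi> \<and> \<not> ord_zero (Z m)" for m
    proof -
      have "Z m \<in> (\<lambda>(k, c, l). \<theta> k c l) ` ({..m} \<times> {..m} \<times> {..m})"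
        unfolding Z_def by (rule Max_in) auto
      then obtain k c l where "Z m = \<theta> k c l" by auto
      then show ?thesis using \<theta>[of k c l] Sigma0_not_ord_zero by metis
    qed
    have "Delta0_succ (Z m) (T k c l)" if "k \<le> m" "c \<le> m" "l \<le> m" for k c l m
    proof (rule Delta0_succ_if_Sigma0)
      show "Sigma0 (\<theta> k c l) (T k c l)" using \<theta> by blast
      show "\<theta> k c l \<le> Z m" unfolding Z_def using that by (intro Max_ge) force+
    qed
    then have "Delta0_succ (Z m) (approx m -` U)" for m U
      using Z by (intro Delta0_succ_vimage_approx) auto
    then have "Sigma0_succ_measurable (Z m) (approx m)" for m
      unfolding Sigma0_succ_measurable_def Delta0_succ_def by blast
    then have "baire_class (Z m) (approx m)" for m using Z less.IH by blast
    then show ?thesis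
      using less.prems(1) False Z approx_tendsto by (intro baire_lim[where \<eta>=Z and fs=approx]) auto
  qed
qed

lemma baire_class_iff_uniform_limit:
  fixes f :: "'a::metric_space \<Rightarrow> 'b::metric_space"
  assumes sep: "\<exists>D::'b set. countable D \<and> closure D = UNIV"
    and nz: "\<not> ord_zero (\<xi>::'i::wellorder)"
    and const_G: "\<And>g. locally_on_Sigma_succ_partition \<xi> const_fun g \<Longrightarrow> G g"
    and G_Delta: "\<And>g. G g \<Longrightarrow> Delta_succ_function \<xi> g"
  shows "baire_class \<xi> f \<longleftrightarrow> (\<exists>fs. uniform_limit UNIV fs f sequentially \<and> (\<forall>k. G (fs k)))"
proof
  assume "baire_class \<xi> f"
  then have "Sigma0_succ_measurable \<xi> f" by (rule baire_class_imp_Sigma0_succ_measurable)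
  then obtain fs :: "nat \<Rightarrow> 'a \<Rightarrow> 'b" where "uniform_limit UNIV fs f sequentially"
    and "\<And>k. locally_on_Sigma_succ_partition \<xi> const_fun (fs k)"
    using Sigma0_succ_measurable_imp_uniform_limit_locally_constant[OF sep nz] by blast
  then show "\<exists>fs. uniform_limit UNIV fs f sequentially \<and> (\<forall>k. G (fs k))"
    using const_G by (intro exI[of _ fs]) simp
next
  assume "\<exists>fs. uniform_limit UNIV fs f sequentially \<and> (\<forall>k. G (fs k))"
  then obtain fs :: "nat \<Rightarrow> 'a \<Rightarrow> 'b" where lim: "uniform_limit UNIV fs f sequentially"
    and "\<And>k. G (fs k)" by blast
  then have "Sigma0_succ_measurable \<xi> (fs k)" for k
    by (intro Delta_succ_function_imp_Sigma0_succ_measurable[OF nz] G_Delta)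
  then have "Sigma0_succ_measurable \<xi> f" by (rule Sigma0_succ_measurable_uniform_limit[OF nz lim])
  then show "baire_class \<xi> f" by (rule Sigma0_succ_measurable_imp_baire_class[OF sep nz])
qed

theorem mainTheorem10:
  fixes \<xi> :: "'i::wellorder" and f :: "'a::metric_space \<Rightarrow> 'b::metric_space"
  assumes sep: "\<exists>D::'b set. countable D \<and> closure D = UNIV"
    and countable_ord: "countable {..\<xi>}"
    and ge1: "\<not> ord_zero \<xi>"
  shows "(baire_class \<xi> f \<longleftrightarrow>
            (\<exists>fs. uniform_limit UNIV fs f sequentially \<and>
               (\<forall>k. locally_on_Sigma_succ_partition \<xi> const_fun (fs k))))
       \<and> (baire_class \<xi> f \<longleftrightarrow>
            (\<exists>fs. uniform_limit UNIV fs f sequentially \<and>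
               (\<forall>k. locally_on_Sigma_succ_partition \<xi> lipschitz_fun (fs k))))
       \<and> (baire_class \<xi> f \<longleftrightarrow>
            (\<exists>fs. uniform_limit UNIV fs f sequentially \<and>
               (\<forall>k. locally_on_Sigma_succ_partition \<xi> cont_fun (fs k))))
       \<and> (baire_class \<xi> f \<longleftrightarrow>
            (\<exists>fs. uniform_limit UNIV fs f sequentially \<and>
               (\<forall>k. Delta_succ_function \<xi> (fs k))))"
proof -
  have const_lip: "locally_on_Sigma_succ_partition \<xi> lipschitz_fun g"
    if "locally_on_Sigma_succ_partition \<xi> const_fun g" for g :: "'a \<Rightarrow> 'b"
    using const_fun_imp_lipschitz_fun that by (rule locally_on_Sigma_succ_partition_mono)
  have lip_cont: "locally_on_Sigma_succ_partition \<xi> cont_fun g"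
    if "locally_on_Sigma_succ_partition \<xi> lipschitz_fun g" for g :: "'a \<Rightarrow> 'b"
    using lipschitz_fun_imp_cont_fun that by (rule locally_on_Sigma_succ_partition_mono)
  have cont_Delta: "Delta_succ_function \<xi> g"
    if "locally_on_Sigma_succ_partition \<xi> cont_fun g" for g :: "'a \<Rightarrow> 'b"
    using ge1 that by (rule locally_continuous_imp_Delta_succ_function)
  show ?thesis
    by (intro conjI baire_class_iff_uniform_limit[OF sep ge1])
       (blast intro: const_lip lip_cont cont_Delta)+
qed


end
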